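(* In the sequent calculus $NL^{\Rightarrow}$: if $\vdash_n\Sigma;\Gamma\Rightarrow\Delta$ and $\Sigma\le\Sigma'$, then $\vdash_n\Sigma';\Gamma\Rightarrow\Delta$.
   Context: Types $\tau ::= \delta \mid \nu \mid \langle\nu\rangle\tau$ ($\delta$ data types, $\nu$ name types). Terms $t ::= x \mid \mathsf{a} \mid c \mid f(\vec t)$ over variables $x$ and a disjoint countably infinite set of name-symbols $\mathsf a$; the signature contains, for all $\nu,\tau$, swapping $(a\;b)\cdot t$, abstraction $\langle a\rangle t$, equality $t\approx u$, freshness $a\#t$, besides constants $c$, function symbols $f$, relation symbols $p$. Formulas: $\top,\bot$, atoms, $\wedge,\vee,\supset,\forall x{:}\tau,\exists x{:}\tau$, and $\mathsf N\mathsf a{:}\nu.\phi$ (binding the name-symbol $\mathsf a$). Contexts $\Sigma::=\cdot\mid\Sigma,x{:}\tau\mid\Sigma\#\mathsf a{:}\nu$ (no symbol twice; $\Sigma\#\mathsf a{:}\nu$ means $\mathsf a$ is fresh for everything in $\Sigma$); $Tm_\Sigma$ = terms well-typed in $\Sigma$; $|\cdot|=\emptyset$, $|\Sigma,x{:}\tau|=|\Sigma|$, $|\Sigma\#\mathsf a{:}\nu|=|\Sigma|\cup\{\mathsf a\#t\mid t\in Tm_\Sigma\}$. $\Sigma\le\Sigma'$ means $Tm_\Sigma\subseteq Tm_{\Sigma'}$ and $|\Sigma|\subseteq|\Sigma'|$. Rules of $NL^{\Rightarrow}$ for $\Sigma;\Gamma\Rightarrow\Delta$: (i) classical G3c rules: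 initial sequents $\Sigma;\Gamma,P\Rightarrow P,\Delta$ ($P$ atomic), $\top R$, $\bot L$, context-sharing left/right rules for $\wedge,\vee,\supset,\forall,\exists$ (eigenvariables $x\notin\Sigma$ added to $\Sigma$, instantiating terms well-typed in $\Sigma$); (ii) $\mathsf N R$: from $\Sigma\#\mathsf a{:}\nu;\Gamma\Rightarrow\phi,\Delta$ infer $\Sigma;\Gamma\Rightarrow\mathsf N\mathsf a{:}\nu.\phi,\Delta$; $\mathsf N L$: from $\Sigma\#\mathsf a{:}\nu;\Gamma,\phi\Rightarrow\Delta$ infer $\Sigma;\Gamma,\mathsf N\mathsf a{:}\nu.\phi\Rightarrow\Delta$ ($\mathsf a\notin\Sigma$); (iii) nonlogical rules: $\approx R$: from $\Sigma;\Gamma,t\approx t\Rightarrow\Delta$ infer $\Sigma;\Gamma\Rightarrow\Delta$; $\approx S$: from $\Sigma;\Gamma,t\approx u,P(t),P(u)\Rightarrow\Delta$ infer $\Sigma;\Gamma,t\approx u,P(t)\Rightarrow\Delta$; for each instance $\bigwedge_j P_j\supset\bigvee_{i\le m}Q_i$ of (S1) $(a\;a)\cdot x\approx x$, (S2) $(a\;b)\cdot(a\;b)\cdot x\approx x$, (S3) $(a\;b)\cdot a\approx b$, (E1) $(a\;b)\cdot c\approx c$, (E2) $(a\;b)\cdot f(\vec t)\approx f((a\;b)\cdot\vec t)$, (E3) $p(\vec t)\supset p((a\;b)\cdot\vec t)$, (F1) $a\#x\wedge b\#x\supset(a\;b)\cdot x\approx x$, (F2) $a\#b$ ($a,b$ of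 distinct name types), (F3) $a\#a\supset\bot$, (F4) $a\#b\vee a\approx b$, (A1) $a\#y\wedge x\approx(a\;b)\cdot y\supset\langle a\rangle x\approx\langle b\rangle y$ (arbitrary well-typed terms), the rule: from $\Sigma;\Gamma,\vec P,Q_i\Rightarrow\Delta$ for all $i$ infer $\Sigma;\Gamma,\vec P\Rightarrow\Delta$; (A2) from $\Sigma;\Gamma,E,a\approx b,t\approx u\Rightarrow\Delta$ and $\Sigma;\Gamma,E,a\#u,t\approx(a\;b)\cdot u\Rightarrow\Delta$ infer $\Sigma;\Gamma,E\Rightarrow\Delta$, $E$ being $\langle a\rangle t\approx\langle b\rangle u$; (A3) from $\Sigma\vdash t:\langle\nu\rangle\sigma$ and $\Sigma,a{:}\nu,x{:}\sigma;\Gamma,t\approx\langle a\rangle x\Rightarrow\Delta$ ($a,x\notin\Sigma$) infer $\Sigma;\Gamma\Rightarrow\Delta$; (F) from $\Sigma\#\mathsf a{:}\nu;\Gamma\Rightarrow\Delta$ ($\mathsf a\notin\Sigma$) infer $\Sigma;\Gamma\Rightarrow\Delta$; ($\Sigma\#$) from $\Sigma;\Gamma,\mathsf a\#t\Rightarrow\Delta$ with $\mathsf a\#t\in|\Sigma|$ infer $\Sigma;\Gamma\Rightarrow\Delta$. $\vdash_n J$ means $J$ has a derivation of height at most $n$. *)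

theory Defs
  imports "HOL-Library.Multiset"
begin

section \<open>Syntax of nominal logic (locally nameless representation of binders)\<close>

type_synonym dtype = nat
type_synonym ntype = nat
type_synonym var = nat
type_synonym nsym = nat    (* name-symbols a (disjoint from variables) *)

datatype ty = TData dtype | TName ntype | TAbs ntype ty

(* Terms. BVar i / BNSym i are de Bruijn indices for variables bound by
   forall/exists resp. name-symbols bound by the N-quantifier. *)
datatype trm =
    Var var | BVar nat
  | NSym nsym | BNSym nat
  | Const nat
  | Fn nat "trm list"
  | Swap trm trm trm
  | Abst trm trm

datatype atm = Rel nat "trm list" | Eq trm trm | Fr trm trm

datatype fm =
    Top | Bot | Atom atm
  | And fm fm | Or fm fm | Imp fm fm
  | All ty fm | Ex ty fm
  | New ntype fm

datatype sig = Sig (ctyp: "nat \<Rightarrow> ty option") (ftyp: "nat \<Rightarrow> (ty list \<times> ty) option")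
                   (rtyp: "nat \<Rightarrow> ty list option")

primrec open_tv :: "nat \<Rightarrow> trm \<Rightarrow> trm \<Rightarrow> trm" where
  "open_tv k s (Var x) = Var x"
| "open_tv k s (BVar i) = (if i = k then s else BVar i)"
| "open_tv k s (NSym a) = NSym a"
| "open_tv k s (BNSym i) = BNSym i"
| "open_tv k s (Const c) = Const c"
| "open_tv k s (Fn f ts) = Fn f (map (open_tv k s) ts)"
| "open_tv k s (Swap a b t) = Swap (open_tv k s a) (open_tv k s b) (open_tv k s t)"
| "open_tv k s (Abst a t) = Abst (open_tv k s a) (open_tv k s t)"

primrec open_tn :: "nat \<Rightarrow> nsym \<Rightarrow> trm \<Rightarrow> trm" where
  "open_tn k n (Var x) = Var x"
| "open_tn k n (BVar i) = BVar i"
| "open_tn k n (NSym a) = NSym a"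
| "open_tn k n (BNSym i) = (if i = k then NSym n else BNSym i)"
| "open_tn k n (Const c) = Const c"
| "open_tn k n (Fn f ts) = Fn f (map (open_tn k n) ts)"
| "open_tn k n (Swap a b t) = Swap (open_tn k n a) (open_tn k n b) (open_tn k n t)"
| "open_tn k n (Abst a t) = Abst (open_tn k n a) (open_tn k n t)"

fun open_av :: "nat \<Rightarrow> trm \<Rightarrow> atm \<Rightarrow> atm" where
  "open_av k s (Rel p ts) = Rel p (map (open_tv k s) ts)"
| "open_av k s (Eq t u) = Eq (open_tv k s t) (open_tv k s u)"
| "open_av k s (Fr t u) = Fr (open_tv k s t) (open_tv k s u)"

fun open_an :: "nat \<Rightarrow> nsym \<Rightarrow> atm \<Rightarrow> atm" where
  "open_an k n (Rel p ts) = Rel p (map (open_tn k n) ts)"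
| "open_an k n (Eq t u) = Eq (open_tn k n t) (open_tn k n u)"
| "open_an k n (Fr t u) = Fr (open_tn k n t) (open_tn k n u)"

primrec open_fv :: "nat \<Rightarrow> trm \<Rightarrow> fm \<Rightarrow> fm" where
  "open_fv k s Top = Top"
| "open_fv k s Bot = Bot"
| "open_fv k s (Atom A) = Atom (open_av k s A)"
| "open_fv k s (And A B) = And (open_fv k s A) (open_fv k s B)"
| "open_fv k s (Or A B) = Or (open_fv k s A) (open_fv k s B)"
| "open_fv k s (Imp A B) = Imp (open_fv k s A) (open_fv k s B)"
| "open_fv k s (All \<tau> A) = All \<tau> (open_fv (Suc k) s A)"
| "open_fv k s (Ex \<tau> A) = Ex \<tau> (open_fv (Suc k) s A)"
| "open_fv k s (New \<nu> A) = New \<nu> (open_fv k s A)"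

primrec open_fn :: "nat \<Rightarrow> nsym \<Rightarrow> fm \<Rightarrow> fm" where
  "open_fn k n Top = Top"
| "open_fn k n Bot = Bot"
| "open_fn k n (Atom A) = Atom (open_an k n A)"
| "open_fn k n (And A B) = And (open_fn k n A) (open_fn k n B)"
| "open_fn k n (Or A B) = Or (open_fn k n A) (open_fn k n B)"
| "open_fn k n (Imp A B) = Imp (open_fn k n A) (open_fn k n B)"
| "open_fn k n (All \<tau> A) = All \<tau> (open_fn k n A)"
| "open_fn k n (Ex \<tau> A) = Ex \<tau> (open_fn k n A)"
| "open_fn k n (New \<nu> A) = New \<nu> (open_fn (Suc k) n A)"

(* A context is a list, most recent entry first:
   CVar x \<tau> # \<Sigma> is "\<Sigma>, x:\<tau>";  CName a \<nu> # \<Sigma> is "\<Sigma> # a:\<nu>". *)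
datatype centry = CVar var ty | CName nsym ntype
type_synonym ctx = "centry list"

definition ctx_vars :: "ctx \<Rightarrow> var set" where
  "ctx_vars \<Sigma> = {x. \<exists>\<tau>. CVar x \<tau> \<in> set \<Sigma>}"

definition ctx_names :: "ctx \<Rightarrow> nsym set" where
  "ctx_names \<Sigma> = {a. \<exists>\<nu>. CName a \<nu> \<in> set \<Sigma>}"

fun wf_ctx :: "ctx \<Rightarrow> bool" where
  "wf_ctx [] = True"
| "wf_ctx (CVar x \<tau> # \<Sigma>) = (x \<notin> ctx_vars \<Sigma> \<and> wf_ctx \<Sigma>)"
| "wf_ctx (CName a \<nu> # \<Sigma>) = (a \<notin> ctx_names \<Sigma> \<and> wf_ctx \<Sigma>)"

(* typing of terms; V / N give the types of the de Bruijn-bound variables / name-symbols *)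
inductive has_type :: "sig \<Rightarrow> ctx \<Rightarrow> ty list \<Rightarrow> ntype list \<Rightarrow> trm \<Rightarrow> ty \<Rightarrow> bool" for S \<Sigma> V N where
  T_Var: "CVar x \<tau> \<in> set \<Sigma> \<Longrightarrow> has_type S \<Sigma> V N (Var x) \<tau>"
| T_BVar: "i < length V \<Longrightarrow> has_type S \<Sigma> V N (BVar i) (V ! i)"
| T_NSym: "CName a \<nu> \<in> set \<Sigma> \<Longrightarrow> has_type S \<Sigma> V N (NSym a) (TName \<nu>)"
| T_BNSym: "i < length N \<Longrightarrow> has_type S \<Sigma> V N (BNSym i) (TName (N ! i))"
| T_Const: "ctyp S c = Some \<tau> \<Longrightarrow> has_type S \<Sigma> V N (Const c) \<tau>"
| T_Fn: "ftyp S f = Some (\<tau>s, \<tau>) \<Longrightarrow> list_all2 (has_type S \<Sigma> V N) ts \<tau>s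
         \<Longrightarrow> has_type S \<Sigma> V N (Fn f ts) \<tau>"
| T_Swap: "has_type S \<Sigma> V N a (TName \<nu>) \<Longrightarrow> has_type S \<Sigma> V N b (TName \<nu>)
         \<Longrightarrow> has_type S \<Sigma> V N t \<tau> \<Longrightarrow> has_type S \<Sigma> V N (Swap a b t) \<tau>"
| T_Abst: "has_type S \<Sigma> V N a (TName \<nu>) \<Longrightarrow> has_type S \<Sigma> V N t \<tau>
         \<Longrightarrow> has_type S \<Sigma> V N (Abst a t) (TAbs \<nu> \<tau>)"

abbreviation typed :: "sig \<Rightarrow> ctx \<Rightarrow> trm \<Rightarrow> ty \<Rightarrow> bool" where
  "typed S \<Sigma> t \<tau> \<equiv> has_type S \<Sigma> [] [] t \<tau>"

fun wf_atm :: "sig \<Rightarrow> ctx \<Rightarrow> ty list \<Rightarrow> ntype list \<Rightarrow> atm \<Rightarrow> bool" where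
  "wf_atm S \<Sigma> V N (Rel p ts) = (\<exists>\<tau>s. rtyp S p = Some \<tau>s \<and> list_all2 (has_type S \<Sigma> V N) ts \<tau>s)"
| "wf_atm S \<Sigma> V N (Eq t u) = (\<exists>\<tau>. has_type S \<Sigma> V N t \<tau> \<and> has_type S \<Sigma> V N u \<tau>)"
| "wf_atm S \<Sigma> V N (Fr a t) = (\<exists>\<nu> \<tau>. has_type S \<Sigma> V N a (TName \<nu>) \<and> has_type S \<Sigma> V N t \<tau>)"

fun wf_fm :: "sig \<Rightarrow> ctx \<Rightarrow> ty list \<Rightarrow> ntype list \<Rightarrow> fm \<Rightarrow> bool" where
  "wf_fm S \<Sigma> V N Top = True"
| "wf_fm S \<Sigma> V N Bot = True"
| "wf_fm S \<Sigma> V N (Atom A) = wf_atm S \<Sigma> V N A"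
| "wf_fm S \<Sigma> V N (And A B) = (wf_fm S \<Sigma> V N A \<and> wf_fm S \<Sigma> V N B)"
| "wf_fm S \<Sigma> V N (Or A B) = (wf_fm S \<Sigma> V N A \<and> wf_fm S \<Sigma> V N B)"
| "wf_fm S \<Sigma> V N (Imp A B) = (wf_fm S \<Sigma> V N A \<and> wf_fm S \<Sigma> V N B)"
| "wf_fm S \<Sigma> V N (All \<tau> A) = wf_fm S \<Sigma> (\<tau> # V) N A"
| "wf_fm S \<Sigma> V N (Ex \<tau> A) = wf_fm S \<Sigma> (\<tau> # V) N A"
| "wf_fm S \<Sigma> V N (New \<nu> A) = wf_fm S \<Sigma> V (\<nu> # N) A"

definition wf_seq :: "sig \<Rightarrow> ctx \<Rightarrow> fm multiset \<Rightarrow> fm multiset \<Rightarrow> bool" where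
  "wf_seq S \<Sigma> \<Gamma> \<Delta> = (\<forall>\<phi> \<in># \<Gamma> + \<Delta>. wf_fm S \<Sigma> [] [] \<phi>)"

definition Tm :: "sig \<Rightarrow> ctx \<Rightarrow> (trm \<times> ty) set" where
  "Tm S \<Sigma> = {(t, \<tau>). typed S \<Sigma> t \<tau>}"

fun facts :: "sig \<Rightarrow> ctx \<Rightarrow> atm set" where
  "facts S [] = {}"
| "facts S (CVar x \<tau> # \<Sigma>) = facts S \<Sigma>"
| "facts S (CName a \<nu> # \<Sigma>) = facts S \<Sigma> \<union> {Fr (NSym a) t | t \<tau>. typed S \<Sigma> t \<tau>}"

definition ctx_le :: "sig \<Rightarrow> ctx \<Rightarrow> ctx \<Rightarrow> bool" where
  "ctx_le S \<Sigma> \<Sigma>' = (Tm S \<Sigma> \<subseteq> Tm S \<Sigma>' \<and> facts S \<Sigma> \<subseteq> facts S \<Sigma>')"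

section \<open>Instances of the nonlogical axioms  /\ Ps --> \/ Qs\<close>

inductive ax_inst :: "sig \<Rightarrow> ctx \<Rightarrow> atm list \<Rightarrow> atm list \<Rightarrow> bool" for S \<Sigma> where
  S1: "typed S \<Sigma> a (TName \<nu>) \<Longrightarrow> typed S \<Sigma> x \<tau>
       \<Longrightarrow> ax_inst S \<Sigma> [] [Eq (Swap a a x) x]"
| S2: "typed S \<Sigma> a (TName \<nu>) \<Longrightarrow> typed S \<Sigma> b (TName \<nu>) \<Longrightarrow> typed S \<Sigma> x \<tau>
       \<Longrightarrow> ax_inst S \<Sigma> [] [Eq (Swap a b (Swap a b x)) x]"
| S3: "typed S \<Sigma> a (TName \<nu>) \<Longrightarrow> typed S \<Sigma> b (TName \<nu>)
       \<Longrightarrow> ax_inst S \<Sigma> [] [Eq (Swap a b a) b]"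
| E1: "typed S \<Sigma> a (TName \<nu>) \<Longrightarrow> typed S \<Sigma> b (TName \<nu>) \<Longrightarrow> ctyp S c = Some \<tau>
       \<Longrightarrow> ax_inst S \<Sigma> [] [Eq (Swap a b (Const c)) (Const c)]"
| E2: "typed S \<Sigma> a (TName \<nu>) \<Longrightarrow> typed S \<Sigma> b (TName \<nu>) \<Longrightarrow> typed S \<Sigma> (Fn f ts) \<tau>
       \<Longrightarrow> ax_inst S \<Sigma> [] [Eq (Swap a b (Fn f ts)) (Fn f (map (Swap a b) ts))]"
| E3: "typed S \<Sigma> a (TName \<nu>) \<Longrightarrow> typed S \<Sigma> b (TName \<nu>) \<Longrightarrow> rtyp S p = Some \<tau>s
       \<Longrightarrow> list_all2 (typed S \<Sigma>) ts \<tau>s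
       \<Longrightarrow> ax_inst S \<Sigma> [Rel p ts] [Rel p (map (Swap a b) ts)]"
| F1: "typed S \<Sigma> a (TName \<nu>) \<Longrightarrow> typed S \<Sigma> b (TName \<nu>) \<Longrightarrow> typed S \<Sigma> x \<tau>
       \<Longrightarrow> ax_inst S \<Sigma> [Fr a x, Fr b x] [Eq (Swap a b x) x]"
| F2: "typed S \<Sigma> a (TName \<nu>) \<Longrightarrow> typed S \<Sigma> b (TName \<nu>') \<Longrightarrow> \<nu> \<noteq> \<nu>'
       \<Longrightarrow> ax_inst S \<Sigma> [] [Fr a b]"
| F3: "typed S \<Sigma> a (TName \<nu>) \<Longrightarrow> ax_inst S \<Sigma> [Fr a a] []"
| F4: "typed S \<Sigma> a (TName \<nu>) \<Longrightarrow> typed S \<Sigma> b (TName \<nu>)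
       \<Longrightarrow> ax_inst S \<Sigma> [] [Fr a b, Eq a b]"
| A1: "typed S \<Sigma> a (TName \<nu>) \<Longrightarrow> typed S \<Sigma> b (TName \<nu>) \<Longrightarrow> typed S \<Sigma> x \<tau>
       \<Longrightarrow> typed S \<Sigma> y \<tau>
       \<Longrightarrow> ax_inst S \<Sigma> [Fr a y, Eq x (Swap a b y)] [Eq (Abst a x) (Abst b y)]"

abbreviation atoms :: "atm list \<Rightarrow> fm multiset" where
  "atoms As \<equiv> mset (map Atom As)"

(* In rule EqS, P(t) is rendered as open_av 0 t P: BVar 0 marks the replaced positions.
   Axiom instances with no disjuncts (F3) are zero-premise rules (leaves), rule Ax0. *)

(* deriv S n \<Sigma> \<Gamma> \<Delta> : the sequent \<Sigma>;\<Gamma> => \<Delta> has a derivation of height at most n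
   (leaves have height 0; a rule with premises of height \<le> n gives height \<le> Suc n). *)
inductive deriv :: "sig \<Rightarrow> nat \<Rightarrow> ctx \<Rightarrow> fm multiset \<Rightarrow> fm multiset \<Rightarrow> bool" for S where
  Init: "wf_seq S \<Sigma> (add_mset (Atom P) \<Gamma>) (add_mset (Atom P) \<Delta>)
     \<Longrightarrow> deriv S n \<Sigma> (add_mset (Atom P) \<Gamma>) (add_mset (Atom P) \<Delta>)"
| TopR: "wf_seq S \<Sigma> \<Gamma> (add_mset Top \<Delta>) \<Longrightarrow> deriv S n \<Sigma> \<Gamma> (add_mset Top \<Delta>)"
| BotL: "wf_seq S \<Sigma> (add_mset Bot \<Gamma>) \<Delta> \<Longrightarrow> deriv S n \<Sigma> (add_mset Bot \<Gamma>) \<Delta>"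
| AndL: "wf_seq S \<Sigma> (add_mset (And A B) \<Gamma>) \<Delta>
     \<Longrightarrow> deriv S n \<Sigma> (add_mset A (add_mset B \<Gamma>)) \<Delta>
     \<Longrightarrow> deriv S (Suc n) \<Sigma> (add_mset (And A B) \<Gamma>) \<Delta>"
| AndR: "wf_seq S \<Sigma> \<Gamma> (add_mset (And A B) \<Delta>)
     \<Longrightarrow> deriv S n \<Sigma> \<Gamma> (add_mset A \<Delta>) \<Longrightarrow> deriv S n \<Sigma> \<Gamma> (add_mset B \<Delta>)
     \<Longrightarrow> deriv S (Suc n) \<Sigma> \<Gamma> (add_mset (And A B) \<Delta>)"
| OrL: "wf_seq S \<Sigma> (add_mset (Or A B) \<Gamma>) \<Delta>
     \<Longrightarrow> deriv S n \<Sigma> (add_mset A \<Gamma>) \<Delta> \<Longrightarrow> deriv S n \<Sigma> (add_mset B \<Gamma>) \<Delta>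
     \<Longrightarrow> deriv S (Suc n) \<Sigma> (add_mset (Or A B) \<Gamma>) \<Delta>"
| OrR: "wf_seq S \<Sigma> \<Gamma> (add_mset (Or A B) \<Delta>)
     \<Longrightarrow> deriv S n \<Sigma> \<Gamma> (add_mset A (add_mset B \<Delta>))
     \<Longrightarrow> deriv S (Suc n) \<Sigma> \<Gamma> (add_mset (Or A B) \<Delta>)"
| ImpL: "wf_seq S \<Sigma> (add_mset (Imp A B) \<Gamma>) \<Delta>
     \<Longrightarrow> deriv S n \<Sigma> \<Gamma> (add_mset A \<Delta>) \<Longrightarrow> deriv S n \<Sigma> (add_mset B \<Gamma>) \<Delta>
     \<Longrightarrow> deriv S (Suc n) \<Sigma> (add_mset (Imp A B) \<Gamma>) \<Delta>"
| ImpR: "wf_seq S \<Sigma> \<Gamma> (add_mset (Imp A B) \<Delta>)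
     \<Longrightarrow> deriv S n \<Sigma> (add_mset A \<Gamma>) (add_mset B \<Delta>)
     \<Longrightarrow> deriv S (Suc n) \<Sigma> \<Gamma> (add_mset (Imp A B) \<Delta>)"
| AllL: "wf_seq S \<Sigma> (add_mset (All \<tau> A) \<Gamma>) \<Delta> \<Longrightarrow> typed S \<Sigma> t \<tau>
     \<Longrightarrow> deriv S n \<Sigma> (add_mset (open_fv 0 t A) (add_mset (All \<tau> A) \<Gamma>)) \<Delta>
     \<Longrightarrow> deriv S (Suc n) \<Sigma> (add_mset (All \<tau> A) \<Gamma>) \<Delta>"
| AllR: "wf_seq S \<Sigma> \<Gamma> (add_mset (All \<tau> A) \<Delta>) \<Longrightarrow> x \<notin> ctx_vars \<Sigma>
     \<Longrightarrow> deriv S n (CVar x \<tau> # \<Sigma>) \<Gamma> (add_mset (open_fv 0 (Var x) A) \<Delta>)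
     \<Longrightarrow> deriv S (Suc n) \<Sigma> \<Gamma> (add_mset (All \<tau> A) \<Delta>)"
| ExL: "wf_seq S \<Sigma> (add_mset (Ex \<tau> A) \<Gamma>) \<Delta> \<Longrightarrow> x \<notin> ctx_vars \<Sigma>
     \<Longrightarrow> deriv S n (CVar x \<tau> # \<Sigma>) (add_mset (open_fv 0 (Var x) A) \<Gamma>) \<Delta>
     \<Longrightarrow> deriv S (Suc n) \<Sigma> (add_mset (Ex \<tau> A) \<Gamma>) \<Delta>"
| ExR: "wf_seq S \<Sigma> \<Gamma> (add_mset (Ex \<tau> A) \<Delta>) \<Longrightarrow> typed S \<Sigma> t \<tau>
     \<Longrightarrow> deriv S n \<Sigma> \<Gamma> (add_mset (open_fv 0 t A) (add_mset (Ex \<tau> A) \<Delta>))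
     \<Longrightarrow> deriv S (Suc n) \<Sigma> \<Gamma> (add_mset (Ex \<tau> A) \<Delta>)"
| NewR: "wf_seq S \<Sigma> \<Gamma> (add_mset (New \<nu> A) \<Delta>) \<Longrightarrow> a \<notin> ctx_names \<Sigma>
     \<Longrightarrow> deriv S n (CName a \<nu> # \<Sigma>) \<Gamma> (add_mset (open_fn 0 a A) \<Delta>)
     \<Longrightarrow> deriv S (Suc n) \<Sigma> \<Gamma> (add_mset (New \<nu> A) \<Delta>)"
| NewL: "wf_seq S \<Sigma> (add_mset (New \<nu> A) \<Gamma>) \<Delta> \<Longrightarrow> a \<notin> ctx_names \<Sigma>
     \<Longrightarrow> deriv S n (CName a \<nu> # \<Sigma>) (add_mset (open_fn 0 a A) \<Gamma>) \<Delta>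
     \<Longrightarrow> deriv S (Suc n) \<Sigma> (add_mset (New \<nu> A) \<Gamma>) \<Delta>"
| EqR: "wf_seq S \<Sigma> \<Gamma> \<Delta> \<Longrightarrow> typed S \<Sigma> t \<tau>
     \<Longrightarrow> deriv S n \<Sigma> (add_mset (Atom (Eq t t)) \<Gamma>) \<Delta>
     \<Longrightarrow> deriv S (Suc n) \<Sigma> \<Gamma> \<Delta>"
| EqS: "wf_seq S \<Sigma> (add_mset (Atom (Eq t u)) (add_mset (Atom (open_av 0 t P)) \<Gamma>)) \<Delta>
     \<Longrightarrow> deriv S n \<Sigma> (add_mset (Atom (Eq t u)) (add_mset (Atom (open_av 0 t P))
                         (add_mset (Atom (open_av 0 u P)) \<Gamma>))) \<Delta>
     \<Longrightarrow> deriv S (Suc n) \<Sigma> (add_mset (Atom (Eq t u)) (add_mset (Atom (open_av 0 t P)) \<Gamma>)) \<Delta>"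
| Ax: "wf_seq S \<Sigma> (\<Gamma> + atoms Ps) \<Delta> \<Longrightarrow> ax_inst S \<Sigma> Ps Qs \<Longrightarrow> Qs \<noteq> []
     \<Longrightarrow> (\<forall>Q \<in> set Qs. deriv S n \<Sigma> (add_mset (Atom Q) (\<Gamma> + atoms Ps)) \<Delta>)
     \<Longrightarrow> deriv S (Suc n) \<Sigma> (\<Gamma> + atoms Ps) \<Delta>"
| Ax0: "wf_seq S \<Sigma> (\<Gamma> + atoms Ps) \<Delta> \<Longrightarrow> ax_inst S \<Sigma> Ps []
     \<Longrightarrow> deriv S n \<Sigma> (\<Gamma> + atoms Ps) \<Delta>"
| A2: "wf_seq S \<Sigma> (add_mset (Atom (Eq (Abst a t) (Abst b u))) \<Gamma>) \<Delta>
     \<Longrightarrow> deriv S n \<Sigma> (add_mset (Atom (Eq (Abst a t) (Abst b u)))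
            (add_mset (Atom (Eq a b)) (add_mset (Atom (Eq t u)) \<Gamma>))) \<Delta>
     \<Longrightarrow> deriv S n \<Sigma> (add_mset (Atom (Eq (Abst a t) (Abst b u)))
            (add_mset (Atom (Fr a u)) (add_mset (Atom (Eq t (Swap a b u))) \<Gamma>))) \<Delta>
     \<Longrightarrow> deriv S (Suc n) \<Sigma> (add_mset (Atom (Eq (Abst a t) (Abst b u))) \<Gamma>) \<Delta>"
| A3: "wf_seq S \<Sigma> \<Gamma> \<Delta> \<Longrightarrow> typed S \<Sigma> t (TAbs \<nu> \<sigma>)
     \<Longrightarrow> a \<notin> ctx_vars \<Sigma> \<Longrightarrow> x \<notin> ctx_vars \<Sigma> \<Longrightarrow> a \<noteq> x
     \<Longrightarrow> deriv S n (CVar x \<sigma> # CVar a (TName \<nu>) # \<Sigma>)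
            (add_mset (Atom (Eq t (Abst (Var a) (Var x)))) \<Gamma>) \<Delta>
     \<Longrightarrow> deriv S (Suc n) \<Sigma> \<Gamma> \<Delta>"
| Fresh: "wf_seq S \<Sigma> \<Gamma> \<Delta> \<Longrightarrow> a \<notin> ctx_names \<Sigma>
     \<Longrightarrow> deriv S n (CName a \<nu> # \<Sigma>) \<Gamma> \<Delta>
     \<Longrightarrow> deriv S (Suc n) \<Sigma> \<Gamma> \<Delta>"
| CtxFresh: "wf_seq S \<Sigma> \<Gamma> \<Delta> \<Longrightarrow> Fr (NSym a) t \<in> facts S \<Sigma>
     \<Longrightarrow> deriv S n \<Sigma> (add_mset (Atom (Fr (NSym a) t)) \<Gamma>) \<Delta>
     \<Longrightarrow> deriv S (Suc n) \<Sigma> \<Gamma> \<Delta>"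

end

theory Submission
  imports Defs
begin

text \<open>Eigen-symbols (of the rules for \<open>\<forall>R\<close>, \<open>\<exists>L\<close>, \<open>\<N>R\<close>, \<open>\<N>L\<close>, A3 and F) chosen fresh for \<open>\<Sigma>\<close>
  may occur in \<open>\<Sigma>'\<close>, so a derivation over \<open>\<Sigma>\<close> cannot be reused verbatim over \<open>\<Sigma>'\<close>. We
  prove the stronger statement that derivability is preserved by every renaming of variables and
  name-symbols that maps \<open>\<Sigma>\<close> into \<open>\<Sigma>'\<close>, preserving types and the freshness facts \<open>|\<Sigma>|\<close>: at an
  eigen-symbol the renaming is updated to a symbol fresh for \<open>\<Sigma>'\<close>, which does not change its
  action on the formulas over \<open>\<Sigma>\<close>. Finally \<open>\<Sigma> \<le> \<Sigma>'\<close> makes the identity such a renaming.\<close>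

primrec rename_trm :: "(var \<Rightarrow> var) \<Rightarrow> (nsym \<Rightarrow> nsym) \<Rightarrow> trm \<Rightarrow> trm" where
  "rename_trm f g (Var x) = Var (f x)"
| "rename_trm f g (BVar i) = BVar i"
| "rename_trm f g (NSym a) = NSym (g a)"
| "rename_trm f g (BNSym i) = BNSym i"
| "rename_trm f g (Const c) = Const c"
| "rename_trm f g (Fn h ts) = Fn h (map (rename_trm f g) ts)"
| "rename_trm f g (Swap a b t) = Swap (rename_trm f g a) (rename_trm f g b) (rename_trm f g t)"
| "rename_trm f g (Abst a t) = Abst (rename_trm f g a) (rename_trm f g t)"

fun rename_atm :: "(var \<Rightarrow> var) \<Rightarrow> (nsym \<Rightarrow> nsym) \<Rightarrow> atm \<Rightarrow> atm" where
  "rename_atm f g (Rel p ts) = Rel p (map (rename_trm f g) ts)"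
| "rename_atm f g (Eq t u) = Eq (rename_trm f g t) (rename_trm f g u)"
| "rename_atm f g (Fr t u) = Fr (rename_trm f g t) (rename_trm f g u)"

primrec rename_fm :: "(var \<Rightarrow> var) \<Rightarrow> (nsym \<Rightarrow> nsym) \<Rightarrow> fm \<Rightarrow> fm" where
  "rename_fm f g Top = Top"
| "rename_fm f g Bot = Bot"
| "rename_fm f g (Atom A) = Atom (rename_atm f g A)"
| "rename_fm f g (And A B) = And (rename_fm f g A) (rename_fm f g B)"
| "rename_fm f g (Or A B) = Or (rename_fm f g A) (rename_fm f g B)"
| "rename_fm f g (Imp A B) = Imp (rename_fm f g A) (rename_fm f g B)"
| "rename_fm f g (All \<tau> A) = All \<tau> (rename_fm f g A)"
| "rename_fm f g (Ex \<tau> A) = Ex \<tau> (rename_fm f g A)"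
| "rename_fm f g (New \<nu> A) = New \<nu> (rename_fm f g A)"

lemma rename_trm_id [simp]: "rename_trm id id t = t"
  by (induction t) (auto simp: map_idI)

lemma rename_atm_id [simp]: "rename_atm id id A = A"
  by (cases A) (auto simp: map_idI)

lemma rename_fm_id [simp]: "rename_fm id id A = A"
  by (induction A) (simp_all del: id_apply)

lemma rename_trm_open_tv: "rename_trm f g (open_tv k s t) = open_tv k (rename_trm f g s) (rename_trm f g t)"
  by (induction t) auto

lemma rename_trm_open_tn: "rename_trm f g (open_tn k a t) = open_tn k (g a) (rename_trm f g t)"
  by (induction t) auto

lemma rename_atm_open_av: "rename_atm f g (open_av k s A) = open_av k (rename_trm f g s) (rename_atm f g A)"
  by (cases A) (auto simp: rename_trm_open_tv)

lemma rename_atm_open_an: "rename_atm f g (open_an k a A) = open_an k (g a) (rename_atm f g A)"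
  by (cases A) (auto simp: rename_trm_open_tn)

lemma rename_fm_open_fv: "rename_fm f g (open_fv k s A) = open_fv k (rename_trm f g s) (rename_fm f g A)"
  by (induction A arbitrary: k) (auto simp: rename_atm_open_av)

lemma rename_fm_open_fn: "rename_fm f g (open_fn k a A) = open_fn k (g a) (rename_fm f g A)"
  by (induction A arbitrary: k) (auto simp: rename_atm_open_an)

lemma image_mset_rename_fm_atoms:
  "image_mset (rename_fm f g) (atoms Ps) = atoms (map (rename_atm f g) Ps)"
  by (induction Ps) auto

lemma has_type_rename:
  assumes "has_type S \<Sigma> V N t \<tau>"
    and "\<And>x \<tau>. CVar x \<tau> \<in> set \<Sigma> \<Longrightarrow> CVar (f x) \<tau> \<in> set \<Sigma>'"
    and "\<And>a \<nu>. CName a \<nu> \<in> set \<Sigma> \<Longrightarrow> CName (g a) \<nu> \<in> set \<Sigma>'"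
  shows "has_type S \<Sigma>' V N (rename_trm f g t) \<tau>"
  using assms(1)
proof (induction rule: has_type.induct)
  case (T_Fn h \<tau>s \<tau> ts)
  then show ?case
    by (auto intro!: has_type.T_Fn simp: list_all2_map1 elim: list_all2_mono)
qed (auto intro: has_type.intros assms(2,3))

lemma has_type_mono:
  "has_type S \<Sigma> V N t \<tau> \<Longrightarrow> set \<Sigma> \<subseteq> set \<Sigma>' \<Longrightarrow> has_type S \<Sigma>' V N t \<tau>"
  using has_type_rename[of S \<Sigma> V N t \<tau> id \<Sigma>' id] by auto

lemma wf_atm_rename:
  assumes "wf_atm S \<Sigma> V N A"
    and "\<And>x \<tau>. CVar x \<tau> \<in> set \<Sigma> \<Longrightarrow> CVar (f x) \<tau> \<in> set \<Sigma>'"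
    and "\<And>a \<nu>. CName a \<nu> \<in> set \<Sigma> \<Longrightarrow> CName (g a) \<nu> \<in> set \<Sigma>'"
  shows "wf_atm S \<Sigma>' V N (rename_atm f g A)"
  using assms(1) has_type_rename[OF _ assms(2,3)]
  by (cases A) (fastforce simp: list_all2_map1 elim!: list_all2_mono)+

lemma wf_fm_rename:
  assumes "wf_fm S \<Sigma> V N A"
    and "\<And>x \<tau>. CVar x \<tau> \<in> set \<Sigma> \<Longrightarrow> CVar (f x) \<tau> \<in> set \<Sigma>'"
    and "\<And>a \<nu>. CName a \<nu> \<in> set \<Sigma> \<Longrightarrow> CName (g a) \<nu> \<in> set \<Sigma>'"
  shows "wf_fm S \<Sigma>' V N (rename_fm f g A)"
  using assms by (induction A arbitrary: V N) (auto intro: wf_atm_rename)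

lemma rename_trm_cong:
  assumes "has_type S \<Sigma> V N t \<tau>"
    and "\<forall>x\<in>ctx_vars \<Sigma>. f1 x = f2 x" and "\<forall>a\<in>ctx_names \<Sigma>. g1 a = g2 a"
  shows "rename_trm f1 g1 t = rename_trm f2 g2 t"
  using assms(1)
proof (induction rule: has_type.induct)
  case (T_Fn h \<tau>s \<tau> ts)
  then show ?case
    by (auto simp: list_all2_conv_all_nth in_set_conv_nth)
qed (use assms(2,3) in \<open>auto simp: ctx_vars_def ctx_names_def\<close>)

lemma rename_atm_cong:
  assumes "wf_atm S \<Sigma> V N A"
    and "\<forall>x\<in>ctx_vars \<Sigma>. f1 x = f2 x" and "\<forall>a\<in>ctx_names \<Sigma>. g1 a = g2 a"
  shows "rename_atm f1 g1 A = rename_atm f2 g2 A"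
  using assms(1) rename_trm_cong[OF _ assms(2,3)]
  by (cases A) (auto simp: list_all2_conv_all_nth in_set_conv_nth intro!: map_cong; blast)+

lemma rename_fm_cong:
  assumes "wf_fm S \<Sigma> V N A"
    and "\<forall>x\<in>ctx_vars \<Sigma>. f1 x = f2 x" and "\<forall>a\<in>ctx_names \<Sigma>. g1 a = g2 a"
  shows "rename_fm f1 g1 A = rename_fm f2 g2 A"
  using assms by (induction A arbitrary: V N) (auto dest: rename_atm_cong)

lemma wf_atm_mono:
  "wf_atm S \<Sigma> V N A \<Longrightarrow> set \<Sigma> \<subseteq> set \<Sigma>' \<Longrightarrow> wf_atm S \<Sigma>' V N A"
  using wf_atm_rename[where f = id and g = id] by (simp add: subset_iff)

lemma facts_wf_atm: "e \<in> facts S \<Sigma> \<Longrightarrow> wf_atm S \<Sigma> [] [] e"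
proof (induction \<Sigma> rule: facts.induct)
  case (2 S x \<tau> \<Sigma>)
  then show ?case
    by (auto elim: wf_atm_mono)
next
  case (3 S a \<nu> \<Sigma>)
  then show ?case
    by (fastforce intro: has_type_mono has_type.T_NSym elim: wf_atm_mono)
qed simp

lemma rename_trm_upd_var:
  "has_type S \<Sigma> V N t \<tau> \<Longrightarrow> x \<notin> ctx_vars \<Sigma> \<Longrightarrow> rename_trm (f(x := y)) g t = rename_trm f g t"
  by (rule rename_trm_cong) auto

lemma rename_trm_upd_name:
  "has_type S \<Sigma> V N t \<tau> \<Longrightarrow> a \<notin> ctx_names \<Sigma> \<Longrightarrow> rename_trm f (g(a := b)) t = rename_trm f g t"
  by (rule rename_trm_cong) auto

lemma rename_atm_upd_var:
  "wf_atm S \<Sigma> V N A \<Longrightarrow> x \<notin> ctx_vars \<Sigma> \<Longrightarrow> rename_atm (f(x := y)) g A = rename_atm f g A"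
  by (rule rename_atm_cong) auto

lemma rename_atm_upd_name:
  "wf_atm S \<Sigma> V N A \<Longrightarrow> a \<notin> ctx_names \<Sigma> \<Longrightarrow> rename_atm f (g(a := b)) A = rename_atm f g A"
  by (rule rename_atm_cong) auto

lemma rename_fm_upd_var:
  "wf_fm S \<Sigma> V N A \<Longrightarrow> x \<notin> ctx_vars \<Sigma> \<Longrightarrow> rename_fm (f(x := y)) g A = rename_fm f g A"
  by (rule rename_fm_cong) auto

lemma rename_fm_upd_name:
  "wf_fm S \<Sigma> V N A \<Longrightarrow> a \<notin> ctx_names \<Sigma> \<Longrightarrow> rename_fm f (g(a := b)) A = rename_fm f g A"
  by (rule rename_fm_cong) auto

lemma wf_seq_add_mset_iff:
  "wf_seq S \<Sigma> (add_mset A \<Gamma>) \<Delta> \<longleftrightarrow> wf_fm S \<Sigma> [] [] A \<and> wf_seq S \<Sigma> \<Gamma> \<Delta>"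
  "wf_seq S \<Sigma> \<Gamma> (add_mset A \<Delta>) \<longleftrightarrow> wf_fm S \<Sigma> [] [] A \<and> wf_seq S \<Sigma> \<Gamma> \<Delta>"
  unfolding wf_seq_def by auto

lemma rename_seq_upd_var:
  assumes "wf_seq S \<Sigma> \<Gamma> \<Delta>" "x \<notin> ctx_vars \<Sigma>"
  shows "image_mset (rename_fm (f(x := y)) g) \<Gamma> = image_mset (rename_fm f g) \<Gamma>"
    and "image_mset (rename_fm (f(x := y)) g) \<Delta> = image_mset (rename_fm f g) \<Delta>"
  using assms unfolding wf_seq_def by (auto intro: image_mset_cong rename_fm_upd_var)

lemma rename_seq_upd_name:
  assumes "wf_seq S \<Sigma> \<Gamma> \<Delta>" "a \<notin> ctx_names \<Sigma>"
  shows "image_mset (rename_fm f (g(a := b))) \<Gamma> = image_mset (rename_fm f g) \<Gamma>"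
    and "image_mset (rename_fm f (g(a := b))) \<Delta> = image_mset (rename_fm f g) \<Delta>"
  using assms unfolding wf_seq_def by (auto intro: image_mset_cong rename_fm_upd_name)

definition ctx_renaming :: "sig \<Rightarrow> (var \<Rightarrow> var) \<Rightarrow> (nsym \<Rightarrow> nsym) \<Rightarrow> ctx \<Rightarrow> ctx \<Rightarrow> bool" where
  "ctx_renaming S f g \<Sigma> \<Sigma>' \<longleftrightarrow>
     (\<forall>x \<tau>. CVar x \<tau> \<in> set \<Sigma> \<longrightarrow> CVar (f x) \<tau> \<in> set \<Sigma>')
     \<and> (\<forall>a \<nu>. CName a \<nu> \<in> set \<Sigma> \<longrightarrow> CName (g a) \<nu> \<in> set \<Sigma>')
     \<and> rename_atm f g ` facts S \<Sigma> \<subseteq> facts S \<Sigma>'"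

lemma ctx_renaming_has_type:
  "ctx_renaming S f g \<Sigma> \<Sigma>' \<Longrightarrow> has_type S \<Sigma> V N t \<tau> \<Longrightarrow> has_type S \<Sigma>' V N (rename_trm f g t) \<tau>"
  unfolding ctx_renaming_def by (rule has_type_rename) auto

lemma ctx_renaming_facts:
  "ctx_renaming S f g \<Sigma> \<Sigma>' \<Longrightarrow> e \<in> facts S \<Sigma> \<Longrightarrow> rename_atm f g e \<in> facts S \<Sigma>'"
  unfolding ctx_renaming_def by auto

lemma ctx_renaming_wf_seq:
  assumes "ctx_renaming S f g \<Sigma> \<Sigma>'" "wf_seq S \<Sigma> \<Gamma> \<Delta>"
  shows "wf_seq S \<Sigma>' (image_mset (rename_fm f g) \<Gamma>) (image_mset (rename_fm f g) \<Delta>)"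
  using assms unfolding wf_seq_def ctx_renaming_def by (auto intro: wf_fm_rename)

lemma ctx_renaming_upd_var:
  assumes "ctx_renaming S f g \<Sigma> \<Sigma>'" "x \<notin> ctx_vars \<Sigma>"
  shows "ctx_renaming S (f(x := y)) g (CVar x \<tau> # \<Sigma>) (CVar y \<tau> # \<Sigma>')"
proof -
  have "CVar ((f(x := y)) z) \<sigma> \<in> set (CVar y \<tau> # \<Sigma>')" if "CVar z \<sigma> \<in> set (CVar x \<tau> # \<Sigma>)" for z \<sigma>
    using that assms unfolding ctx_renaming_def ctx_vars_def by auto
  moreover have "rename_atm (f(x := y)) g e = rename_atm f g e" if "e \<in> facts S \<Sigma>" for e
    using rename_atm_upd_var[OF facts_wf_atm[OF that] assms(2)] .
  ultimately show ?thesis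
    using assms(1) unfolding ctx_renaming_def by (auto simp: image_subset_iff)
qed

lemma ctx_renaming_upd_name:
  assumes "ctx_renaming S f g \<Sigma> \<Sigma>'" "a \<notin> ctx_names \<Sigma>"
  shows "ctx_renaming S f (g(a := b)) (CName a \<nu> # \<Sigma>) (CName b \<nu> # \<Sigma>')"
proof -
  have "CName ((g(a := b)) c) \<mu> \<in> set (CName b \<nu> # \<Sigma>')" if "CName c \<mu> \<in> set (CName a \<nu> # \<Sigma>)" for c \<mu>
    using that assms unfolding ctx_renaming_def ctx_names_def by auto
  moreover have "rename_atm f (g(a := b)) e \<in> facts S (CName b \<nu> # \<Sigma>')"
    if e: "e \<in> facts S (CName a \<nu> # \<Sigma>)" for e
  proof -
    consider "e \<in> facts S \<Sigma>" | t \<tau> where "e = Fr (NSym a) t" "typed S \<Sigma> t \<tau>"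
      using e by auto
    then show ?thesis
    proof cases
      case 1
      then show ?thesis
        using rename_atm_upd_name[OF facts_wf_atm[OF 1] assms(2)] ctx_renaming_facts[OF assms(1)]
        by auto
    next
      case 2
      have "rename_trm f (g(a := b)) t = rename_trm f g t"
        using rename_trm_upd_name[OF 2(2) assms(2)] .
      with 2 ctx_renaming_has_type[OF assms(1) 2(2)] show ?thesis by auto
    qed
  qed
  ultimately show ?thesis
    using assms(1) unfolding ctx_renaming_def by (auto simp: image_subset_iff)
qed

lemma ax_inst_rename:
  assumes "ax_inst S \<Sigma> Ps Qs" "ctx_renaming S f g \<Sigma> \<Sigma>'"
  shows "ax_inst S \<Sigma>' (map (rename_atm f g) Ps) (map (rename_atm f g) Qs)"
  using assms(1)
proof (induction rule: ax_inst.induct)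
  case (E2 a \<nu> b h ts \<tau>)
  have "typed S \<Sigma>' (Fn h (map (rename_trm f g) ts)) \<tau>"
    using ctx_renaming_has_type[OF assms(2) E2(3)] by simp
  from ax_inst.E2[OF E2(1,2)[THEN ctx_renaming_has_type[OF assms(2)]] this]
  show ?case by (simp add: comp_def)
next
  case (E3 a \<nu> b p \<tau>s ts)
  have "list_all2 (typed S \<Sigma>') (map (rename_trm f g) ts) \<tau>s"
    using E3(4) by (auto simp: list_all2_map1 elim!: list_all2_mono intro: ctx_renaming_has_type[OF assms(2)])
  from ax_inst.E3[OF E3(1,2)[THEN ctx_renaming_has_type[OF assms(2)]] E3(3) this]
  show ?case by (simp add: comp_def)
qed (auto intro!: ax_inst.intros ctx_renaming_has_type[OF assms(2)])

lemma finite_ctx_vars: "finite (ctx_vars \<Sigma>)"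
proof (rule finite_subset)
  show "ctx_vars \<Sigma> \<subseteq> (\<lambda>e. case e of CVar x _ \<Rightarrow> x | CName a _ \<Rightarrow> a) ` set \<Sigma>"
    unfolding ctx_vars_def by force
qed simp

lemma finite_ctx_names: "finite (ctx_names \<Sigma>)"
proof (rule finite_subset)
  show "ctx_names \<Sigma> \<subseteq> (\<lambda>e. case e of CVar x _ \<Rightarrow> x | CName a _ \<Rightarrow> a) ` set \<Sigma>"
    unfolding ctx_names_def by force
qed simp

lemma obtain_fresh_var: obtains y where "y \<notin> ctx_vars \<Sigma>"
  using ex_new_if_finite[OF infinite_UNIV_nat finite_ctx_vars] by blast

lemma obtain_fresh_name: obtains b where "b \<notin> ctx_names \<Sigma>"
  using ex_new_if_finite[OF infinite_UNIV_nat finite_ctx_names] by blast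

lemma deriv_rename:
  assumes "deriv S n \<Sigma> \<Gamma> \<Delta>" "ctx_renaming S f g \<Sigma> \<Sigma>'"
  shows "deriv S n \<Sigma>' (image_mset (rename_fm f g) \<Gamma>) (image_mset (rename_fm f g) \<Delta>)"
  using assms
proof (induction arbitrary: f g \<Sigma>' rule: deriv.induct)
  case (AllR \<Sigma> \<Gamma> \<tau> A \<Delta> x n)
  obtain y where y: "y \<notin> ctx_vars \<Sigma>'" by (rule obtain_fresh_var)
  from AllR.hyps(1) have "wf_seq S \<Sigma> \<Gamma> \<Delta>" "wf_fm S \<Sigma> [\<tau>] [] A"
    by (simp_all add: wf_seq_add_mset_iff)
  note agree = rename_seq_upd_var[OF this(1) AllR.hyps(2)] rename_fm_upd_var[OF this(2) AllR.hyps(2)]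
  from AllR.IH[OF ctx_renaming_upd_var[where y = y, OF AllR.prems AllR.hyps(2)]]
  have "deriv S n (CVar y \<tau> # \<Sigma>') (image_mset (rename_fm f g) \<Gamma>)
      (add_mset (open_fv 0 (Var y) (rename_fm f g A)) (image_mset (rename_fm f g) \<Delta>))"
    using agree unfolding fun_upd_def by (simp add: rename_fm_open_fv)
  with ctx_renaming_wf_seq[OF AllR.prems AllR.hyps(1)] y show ?case
    by (auto intro: deriv.AllR)
next
  case (ExL \<Sigma> \<tau> A \<Gamma> \<Delta> x n)
  obtain y where y: "y \<notin> ctx_vars \<Sigma>'" by (rule obtain_fresh_var)
  from ExL.hyps(1) have "wf_seq S \<Sigma> \<Gamma> \<Delta>" "wf_fm S \<Sigma> [\<tau>] [] A"
    by (simp_all add: wf_seq_add_mset_iff)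
  note agree = rename_seq_upd_var[OF this(1) ExL.hyps(2)] rename_fm_upd_var[OF this(2) ExL.hyps(2)]
  from ExL.IH[OF ctx_renaming_upd_var[where y = y, OF ExL.prems ExL.hyps(2)]]
  have "deriv S n (CVar y \<tau> # \<Sigma>')
      (add_mset (open_fv 0 (Var y) (rename_fm f g A)) (image_mset (rename_fm f g) \<Gamma>))
      (image_mset (rename_fm f g) \<Delta>)"
    using agree unfolding fun_upd_def by (simp add: rename_fm_open_fv)
  with ctx_renaming_wf_seq[OF ExL.prems ExL.hyps(1)] y show ?case
    by (auto intro: deriv.ExL)
next
  case (NewR \<Sigma> \<Gamma> \<nu> A \<Delta> a n)
  obtain b where b: "b \<notin> ctx_names \<Sigma>'" by (rule obtain_fresh_name)
  from NewR.hyps(1) have "wf_seq S \<Sigma> \<Gamma> \<Delta>" "wf_fm S \<Sigma> [] [\<nu>] A"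
    by (simp_all add: wf_seq_add_mset_iff)
  note agree = rename_seq_upd_name[OF this(1) NewR.hyps(2)] rename_fm_upd_name[OF this(2) NewR.hyps(2)]
  from NewR.IH[OF ctx_renaming_upd_name[where b = b, OF NewR.prems NewR.hyps(2)]]
  have "deriv S n (CName b \<nu> # \<Sigma>') (image_mset (rename_fm f g) \<Gamma>)
      (add_mset (open_fn 0 b (rename_fm f g A)) (image_mset (rename_fm f g) \<Delta>))"
    using agree unfolding fun_upd_def by (simp add: rename_fm_open_fn)
  with ctx_renaming_wf_seq[OF NewR.prems NewR.hyps(1)] b show ?case
    by (auto intro: deriv.NewR)
next
  case (NewL \<Sigma> \<nu> A \<Gamma> \<Delta> a n)
  obtain b where b: "b \<notin> ctx_names \<Sigma>'" by (rule obtain_fresh_name)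
  from NewL.hyps(1) have "wf_seq S \<Sigma> \<Gamma> \<Delta>" "wf_fm S \<Sigma> [] [\<nu>] A"
    by (simp_all add: wf_seq_add_mset_iff)
  note agree = rename_seq_upd_name[OF this(1) NewL.hyps(2)] rename_fm_upd_name[OF this(2) NewL.hyps(2)]
  from NewL.IH[OF ctx_renaming_upd_name[where b = b, OF NewL.prems NewL.hyps(2)]]
  have "deriv S n (CName b \<nu> # \<Sigma>')
      (add_mset (open_fn 0 b (rename_fm f g A)) (image_mset (rename_fm f g) \<Gamma>))
      (image_mset (rename_fm f g) \<Delta>)"
    using agree unfolding fun_upd_def by (simp add: rename_fm_open_fn)
  with ctx_renaming_wf_seq[OF NewL.prems NewL.hyps(1)] b show ?case
    by (auto intro: deriv.NewL)
next
  case (Fresh \<Sigma> \<Gamma> \<Delta> a n \<nu>)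
  obtain b where b: "b \<notin> ctx_names \<Sigma>'" by (rule obtain_fresh_name)
  note agree = rename_seq_upd_name[OF Fresh.hyps(1,2)]
  from Fresh.IH[OF ctx_renaming_upd_name[where b = b, OF Fresh.prems Fresh.hyps(2)]]
  have "deriv S n (CName b \<nu> # \<Sigma>') (image_mset (rename_fm f g) \<Gamma>) (image_mset (rename_fm f g) \<Delta>)"
    using agree unfolding fun_upd_def by simp
  with ctx_renaming_wf_seq[OF Fresh.prems Fresh.hyps(1)] b show ?case
    by (auto intro: deriv.Fresh)
next
  case (A3 \<Sigma> \<Gamma> \<Delta> t \<nu> \<sigma> a x n)
  obtain a' where a': "a' \<notin> ctx_vars \<Sigma>'" by (rule obtain_fresh_var)
  obtain x' where "x' \<notin> ctx_vars (CVar a' (TName \<nu>) # \<Sigma>')" by (rule obtain_fresh_var)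
  then have x': "x' \<notin> ctx_vars \<Sigma>'" "a' \<noteq> x'" by (auto simp: ctx_vars_def)
  have x: "x \<notin> ctx_vars (CVar a (TName \<nu>) # \<Sigma>)"
    using A3.hyps(4,5) by (auto simp: ctx_vars_def)
  note agree = rename_seq_upd_var[OF A3.hyps(1,4), where f = "f(a := a')"]
    rename_seq_upd_var[OF A3.hyps(1,3), where f = f]
    rename_trm_upd_var[OF A3.hyps(2,4), where f = "f(a := a')"]
    rename_trm_upd_var[OF A3.hyps(2,3), where f = f]
  from A3.IH[OF ctx_renaming_upd_var[where y = x', OF ctx_renaming_upd_var[where y = a', OF A3.prems A3.hyps(3)] x]]
  have "deriv S n (CVar x' \<sigma> # CVar a' (TName \<nu>) # \<Sigma>')
      (add_mset (Atom (Eq (rename_trm f g t) (Abst (Var a') (Var x')))) (image_mset (rename_fm f g) \<Gamma>))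
      (image_mset (rename_fm f g) \<Delta>)"
    using agree A3.hyps(5) unfolding fun_upd_def by simp
  then show ?case
    by (rule deriv.A3[OF ctx_renaming_wf_seq[OF A3.prems A3.hyps(1)]
          ctx_renaming_has_type[OF A3.prems A3.hyps(2)] a' x'])
next
  case (Ax \<Sigma> \<Gamma> Ps \<Delta> Qs n)
  have split: "image_mset (rename_fm f g) (\<Gamma> + atoms Ps)
      = image_mset (rename_fm f g) \<Gamma> + atoms (map (rename_atm f g) Ps)"
    by (simp only: image_mset_union image_mset_rename_fm_atoms)
  have "deriv S (Suc n) \<Sigma>' (image_mset (rename_fm f g) \<Gamma> + atoms (map (rename_atm f g) Ps))
      (image_mset (rename_fm f g) \<Delta>)"
  proof (rule deriv.Ax)
    show "wf_seq S \<Sigma>' (image_mset (rename_fm f g) \<Gamma> + atoms (map (rename_atm f g) Ps))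
        (image_mset (rename_fm f g) \<Delta>)"
      using ctx_renaming_wf_seq[OF Ax.prems Ax.hyps(1)] by (simp only: split)
    show "\<forall>Q \<in> set (map (rename_atm f g) Qs). deriv S n \<Sigma>'
        (add_mset (Atom Q) (image_mset (rename_fm f g) \<Gamma> + atoms (map (rename_atm f g) Ps)))
        (image_mset (rename_fm f g) \<Delta>)"
    proof
      fix Q assume "Q \<in> set (map (rename_atm f g) Qs)"
      then obtain Q0 where "Q0 \<in> set Qs" "Q = rename_atm f g Q0" by auto
      with Ax.IH Ax.prems show "deriv S n \<Sigma>'
          (add_mset (Atom Q) (image_mset (rename_fm f g) \<Gamma> + atoms (map (rename_atm f g) Ps)))
          (image_mset (rename_fm f g) \<Delta>)"
        by (simp only: image_mset_add_mset rename_fm.simps split flip: split)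
    qed
  qed (use ax_inst_rename[OF Ax.hyps(2) Ax.prems] Ax.hyps(3) in auto)
  then show ?case by (simp only: split)
next
  case (Ax0 \<Sigma> \<Gamma> Ps \<Delta> n)
  have split: "image_mset (rename_fm f g) (\<Gamma> + atoms Ps)
      = image_mset (rename_fm f g) \<Gamma> + atoms (map (rename_atm f g) Ps)"
    by (simp only: image_mset_union image_mset_rename_fm_atoms)
  have "deriv S n \<Sigma>' (image_mset (rename_fm f g) \<Gamma> + atoms (map (rename_atm f g) Ps))
      (image_mset (rename_fm f g) \<Delta>)"
    using ctx_renaming_wf_seq[OF Ax0.prems Ax0.hyps(1)] ax_inst_rename[OF Ax0.hyps(2) Ax0.prems]
    by (intro deriv.Ax0) (simp_all only: split list.map)
  then show ?case by (simp only: split)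
next
  case (CtxFresh \<Sigma> \<Gamma> \<Delta> a t n)
  show ?case
    using ctx_renaming_wf_seq[OF CtxFresh.prems CtxFresh.hyps(1)]
      ctx_renaming_facts[OF CtxFresh.prems CtxFresh.hyps(2)] CtxFresh.IH[OF CtxFresh.prems]
    by (auto intro: deriv.CtxFresh)
qed (fastforce dest: ctx_renaming_wf_seq simp: rename_fm_open_fv rename_atm_open_av
     intro: ctx_renaming_has_type deriv.Init deriv.TopR deriv.BotL deriv.AndL deriv.AndR deriv.OrL
       deriv.OrR deriv.ImpL deriv.ImpR deriv.AllL deriv.ExR deriv.EqR deriv.EqS deriv.A2)+

lemma ctx_le_imp_ctx_renaming_id:
  assumes "ctx_le S \<Sigma> \<Sigma>'"
  shows "ctx_renaming S id id \<Sigma> \<Sigma>'"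
proof -
  have typed_le: "typed S \<Sigma>' t \<tau>" if "typed S \<Sigma> t \<tau>" for t \<tau>
    using that assms unfolding ctx_le_def Tm_def by auto
  have "CVar x \<tau> \<in> set \<Sigma>'" if "CVar x \<tau> \<in> set \<Sigma>" for x \<tau>
    using typed_le[OF has_type.T_Var[OF that]] by (cases rule: has_type.cases) auto
  moreover have "CName a \<nu> \<in> set \<Sigma>'" if "CName a \<nu> \<in> set \<Sigma>" for a \<nu>
    using typed_le[OF has_type.T_NSym[OF that]] by (cases rule: has_type.cases) auto
  ultimately show ?thesis
    using assms unfolding ctx_renaming_def ctx_le_def by auto
qed

theorem mainTheorem19:
  assumes "wf_ctx \<Sigma>" and "wf_ctx \<Sigma>'"
    and "deriv S n \<Sigma> \<Gamma> \<Delta>"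
    and "ctx_le S \<Sigma> \<Sigma>'"
  shows "deriv S n \<Sigma>' \<Gamma> \<Delta>"
  using deriv_rename[OF assms(3) ctx_le_imp_ctx_renaming_id[OF assms(4)]]
  by (simp add: multiset.map_ident_strong)

end
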